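(* Let $0<p<1$ and let $r$ be a positive integer. A bounded row vector $\vec x=(\dots,x_{-2},x_{-1},x_0,x_1,x_2,\dots)$ (indexed by the integers) belongs to $\mathrm{rowcone}(\{\mathcal{M}_{DNB(p,r)}\})$ if for all integers $k$, $$\sum_{j=-r}^{r}(-1)^j f_B\!\left(j;\tfrac{p}{1+p},r\right)x_{k+j}\ \ge\ 0,$$ where $f_B(\cdot;\frac{p}{1+p},r)$ is the probability mass function of $X-Y$ for independent $X,Y$ having the Binomial distribution with success probability $\frac{p}{1+p}$ and $r$ trials.
   Context: The negative binomial NB$(p,r)$ distribution has mass $\binom{k+r-1}{k}p^k(1-p)^r$ on nonnegative integers $k$. $\mathcal{M}_{DNB(p,r)}$ (differenced negative binomial mechanism) is the algorithm with input domain and range the integers $\mathbb{Z}$ that adds $X-Y$ to its input, where $X,Y$ are independent NB$(p,r)$ random variables. An algorithm is identified with its output probabilities. For algorithms $\mathcal{M}$, $\mathcal{A}$ with $\mathrm{range}(\mathcal{M})\subseteq\mathrm{domain}(\mathcal{A})$ and independent randomness, $\mathcal{A}\circ\mathcal{M}$ runs $\mathcal{M}$ then $\mathcal{A}$ on its output. $\mathrm{CNF}(\mathrm{Priv})$ of a set of algorithms with domain $\mathbb{Z}$ is the smallest set $S$ containing $\mathrm{Priv}$ such that $\mathcal{M}\in S$ implies $\mathcal{A}\circ\mathcal{M}\in S$ for every such $\mathcal{A}$, and $\mathcal{M}_1,\mathcal{M}_2\in S$, $t\in[0,1]$ implies that the algorithm running $\mathcal{M}_1$ with probability $t$ and $\mathcal{M}_2$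 with probability $1-t$ is in $S$. $\mathrm{rowcone}(\mathrm{Priv})=\{(c\,P[\mathcal{M}(n)=\omega])_{n\in\mathbb{Z}} : c\ge0,\ \mathcal{M}\in\mathrm{CNF}(\mathrm{Priv}),\ \omega\in\mathrm{range}(\mathcal{M})\}$. *)

theory Defs
  imports "HOL-Probability.Probability"
begin

text \<open>Negative binomial NB(p,r) of the paper: mass (k+r-1 choose k) p^k (1-p)^r.
  The library's neg_binomial_pmf r q has mass (k+r-1 choose k) q^r (1-q)^k,
  so NB(p,r) = neg_binomial_pmf r (1-p).\<close>
definition NB :: "real \<Rightarrow> nat \<Rightarrow> nat pmf" where
  "NB p r = neg_binomial_pmf r (1 - p)"

definition M_DNB :: "real \<Rightarrow> nat \<Rightarrow> int \<Rightarrow> int pmf" where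
  "M_DNB p r n = map_pmf (\<lambda>(x, y). n + int x - int y) (pair_pmf (NB p r) (NB p r))"

definition diff_binomial_pmf :: "real \<Rightarrow> nat \<Rightarrow> int pmf" where
  "diff_binomial_pmf q r = map_pmf (\<lambda>(x, y). int x - int y) (pair_pmf (binomial_pmf r q) (binomial_pmf r q))"

inductive_set CNF :: "(int \<Rightarrow> int pmf) set \<Rightarrow> (int \<Rightarrow> int pmf) set" for Priv where
  base: "M \<in> Priv \<Longrightarrow> M \<in> CNF Priv"
| post: "M \<in> CNF Priv \<Longrightarrow> (\<lambda>n. bind_pmf (M n) A) \<in> CNF Priv"
| mix: "M1 \<in> CNF Priv \<Longrightarrow> M2 \<in> CNF Priv \<Longrightarrow> 0 \<le> t \<Longrightarrow> t \<le> 1 \<Longrightarrow>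
        (\<lambda>n. bind_pmf (bernoulli_pmf t) (\<lambda>b. if b then M1 n else M2 n)) \<in> CNF Priv"

definition rowcone :: "(int \<Rightarrow> int pmf) set \<Rightarrow> (int \<Rightarrow> real) set" where
  "rowcone Priv = {v. \<exists>c M \<omega>. c \<ge> 0 \<and> M \<in> CNF Priv \<and> v = (\<lambda>n. c * pmf (M n) \<omega>)}"

end

theory Submission
  imports Defs
begin

(*
  Let T[N,w,s] f n = E_{k ~ N} [w^k * f (n + s*k)]  (shift_average N w s f n).
  Testing the mechanism against a bounded z gives E [z (M_DNB n)] = T[NB,1,1] (T[NB,1,-1] z) n,
  and the alternating sum in the hypothesis is y = T[Bin,-1,1] (T[Bin,-1,-1] x).
  These operators commute, and with q = p/(1+p), c = (1-p)/(1+p) the operator T[NB(p,r),1,s]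
  inverts T[Bin(r,q),-1,s] up to the factor c^r; in generating functions,
  ((1-p)/(1-pt))^r * ((1-pt)/(1+p))^r = c^r.  Hence the nonnegative bounded vector y satisfies
  E [y (M_DNB n)] = c^(2r) * x n, and post-processing the mechanism by a coin whose bias is
  proportional to y exhibits x as a scaled row of the cone.  For a single geometric factor the
  inversion holds because h = T[Geom,1,s] g satisfies h n = (1-p) g n + p h (n+s), and a bounded
  solution of d n = p d (n+s) vanishes.
*)

lemma expectation_bind_pmf_bounded:
  fixes f :: "'b \<Rightarrow> real"
  assumes "\<And>x. \<bar>f x\<bar> \<le> B"
  shows "measure_pmf.expectation (bind_pmf M N) f =
    measure_pmf.expectation M (\<lambda>x. measure_pmf.expectation (N x) f)"
  unfolding measure_pmf_bind
  by (rule integral_bind[where K="count_space UNIV" and B=B and B'=1])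
     (use assms in \<open>auto simp: measure_pmf.emeasure_space_1 measure_pmf_in_subprob_algebra
                      intro: measure_pmf.finite_measure_axioms\<close>)

lemma expectation_pair_pmf_bounded:
  fixes f :: "'a \<times> 'b \<Rightarrow> real"
  assumes "\<And>x. \<bar>f x\<bar> \<le> B"
  shows "measure_pmf.expectation (pair_pmf A C) f =
    measure_pmf.expectation A (\<lambda>a. measure_pmf.expectation C (\<lambda>c. f (a, c)))"
  unfolding pair_pmf_def
  by (simp add: expectation_bind_pmf_bounded[where B=B] assms)

lemma abs_expectation_le_bound:
  fixes f :: "'a \<Rightarrow> real"
  assumes "\<And>x. \<bar>f x\<bar> \<le> B"
  shows "\<bar>measure_pmf.expectation M f\<bar> \<le> B"
proof -
  have "integrable (measure_pmf M) f"
    by (rule measure_pmf.integrable_const_bound[where B=B]) (use assms in auto)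
  then have "measure_pmf.expectation M (\<lambda>x. \<bar>f x\<bar>) \<le> measure_pmf.expectation M (\<lambda>_. B)"
    by (intro integral_mono) (auto simp: assms)
  then show ?thesis
    by (intro order_trans[OF integral_abs_bound]) simp
qed

definition shift_average :: "nat pmf \<Rightarrow> real \<Rightarrow> int \<Rightarrow> (int \<Rightarrow> real) \<Rightarrow> int \<Rightarrow> real" where
  "shift_average N w s f n = measure_pmf.expectation N (\<lambda>k. w ^ k * f (n + s * int k))"

lemma abs_weighted_le_bound:
  fixes w :: real
  assumes "\<bar>w\<bar> \<le> 1" "\<bar>y\<bar> \<le> B"
  shows "\<bar>w ^ k * y\<bar> \<le> B"
proof -
  have "\<bar>w ^ k * y\<bar> \<le> 1 * \<bar>y\<bar>"
    unfolding abs_mult power_abs by (intro mult_right_mono power_le_one) (use assms in auto)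
  then show ?thesis using assms(2) by simp
qed

lemma abs_shift_average_le:
  assumes "\<bar>w\<bar> \<le> 1" "\<And>n. \<bar>f n\<bar> \<le> B"
  shows "\<bar>shift_average N w s f n\<bar> \<le> B"
  unfolding shift_average_def
  by (rule abs_expectation_le_bound) (rule abs_weighted_le_bound[OF assms])

lemma shift_average_add_pmf:
  assumes "\<bar>w\<bar> \<le> 1" "\<And>n. \<bar>f n\<bar> \<le> B"
  shows "shift_average (map_pmf (\<lambda>(a, b). a + b) (pair_pmf N1 N2)) w s f =
    shift_average N1 w s (shift_average N2 w s f)"
proof
  fix n
  show "shift_average (map_pmf (\<lambda>(a, b). a + b) (pair_pmf N1 N2)) w s f n =
    shift_average N1 w s (shift_average N2 w s f) n"
    unfolding shift_average_def integral_map_pmf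
    by (subst expectation_pair_pmf_bounded[where B=B])
       (auto simp: abs_weighted_le_bound assms power_add algebra_simps
             simp flip: integral_mult_right_zero)
qed

lemma shift_average_commute:
  assumes "\<bar>w\<bar> \<le> 1" "\<bar>w'\<bar> \<le> 1" "\<And>n. \<bar>f n\<bar> \<le> B"
  shows "shift_average N w s (shift_average M w' s' f) =
    shift_average M w' s' (shift_average N w s f)"
proof
  fix n
  define g where "g = (\<lambda>(a, b). w ^ a * (w' ^ b * f (n + s * int a + s' * int b)))"
  have g: "\<bar>g x\<bar> \<le> B" for x
    using assms by (auto simp: g_def abs_weighted_le_bound split: prod.splits)
  have "shift_average N w s (shift_average M w' s' f) n = measure_pmf.expectation (pair_pmf N M) g"
    unfolding shift_average_def
    by (subst expectation_pair_pmf_bounded[OF g])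
       (simp add: g_def algebra_simps flip: integral_mult_right_zero)
  also have "\<dots> = measure_pmf.expectation (pair_pmf M N) (\<lambda>(b, a). g (a, b))"
    by (subst pair_commute_pmf) (simp add: case_prod_unfold)
  also have "\<dots> = shift_average M w' s' (shift_average N w s f) n"
    unfolding shift_average_def
    by (subst expectation_pair_pmf_bounded[where B=B])
       (auto simp: g_def abs_weighted_le_bound assms algebra_simps
             simp flip: integral_mult_right_zero)
  finally show "shift_average N w s (shift_average M w' s' f) n =
    shift_average M w' s' (shift_average N w s f) n" .
qed

lemma shift_average_bernoulli:
  assumes "0 \<le> q" "q \<le> 1"
  shows "shift_average (map_pmf of_bool (bernoulli_pmf q)) w s f n = (1 - q) * f n + q * w * f (n + s)"
  using assms by (simp add: shift_average_def algebra_simps)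

lemma binomial_pmf_Suc_add:
  assumes "q \<in> {0..1}"
  shows "binomial_pmf (Suc r) q =
    map_pmf (\<lambda>(a, b). a + b) (pair_pmf (map_pmf of_bool (bernoulli_pmf q)) (binomial_pmf r q))"
  by (simp add: binomial_pmf_Suc[OF assms] pair_pmf_def map_pmf_def bind_assoc_pmf
                bind_return_pmf of_bool_def)

lemma NB_Suc: "NB p (Suc r) = map_pmf (\<lambda>(a, b). a + b) (pair_pmf (geometric_pmf (1 - p)) (NB p r))"
  by (simp add: NB_def neg_binomial_pmf_Suc)

lemma bounded_contraction_eq_0:
  fixes d :: "int \<Rightarrow> real"
  assumes "0 \<le> p" "p < 1" and rec: "\<And>n. d n = p * d (n + s)" and bound: "\<And>n. \<bar>d n\<bar> \<le> C"
  shows "d n = 0"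
proof -
  have iterated: "\<bar>d n\<bar> \<le> p ^ k * C" for k
  proof (induction k arbitrary: n)
    case 0
    then show ?case using bound by simp
  next
    case (Suc k)
    have "\<bar>d n\<bar> = p * \<bar>d (n + s)\<bar>" using rec[of n] assms(1) by (simp add: abs_mult)
    also have "\<dots> \<le> p * (p ^ k * C)" using Suc[of "n + s"] assms(1) by (simp add: mult_left_mono)
    finally show ?case by simp
  qed
  have "(\<lambda>k. p ^ k * C) \<longlonglongrightarrow> 0"
    using assms(1,2) by (intro tendsto_mult_left_zero LIMSEQ_power_zero) simp
  then have "\<bar>d n\<bar> \<le> 0"
    using iterated by (intro LIMSEQ_le_const) auto
  then show ?thesis by simp
qed

lemma shift_average_geometric_bernoulli:
  assumes p: "0 < p" "p < 1" and bound: "\<And>n. \<bar>f n\<bar> \<le> B"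
  shows "shift_average (geometric_pmf (1 - p)) 1 s
           (shift_average (map_pmf of_bool (bernoulli_pmf (p / (1 + p)))) (-1) s f) n =
         (1 - p) / (1 + p) * f n"
proof -
  define q where "q = p / (1 + p)"
  define c where "c = (1 - p) / (1 + p)"
  have q: "0 \<le> q" "q \<le> 1" and c: "0 \<le> c" "c \<le> 1"
    using p by (auto simp: q_def c_def field_simps)
  define g where "g = shift_average (map_pmf of_bool (bernoulli_pmf q)) (-1) s f"
  have g: "g n = (1 - q) * f n - q * f (n + s)" for n
    unfolding g_def using q by (simp add: shift_average_bernoulli)
  have g_bound: "\<bar>g n\<bar> \<le> B" for n
    unfolding g_def by (rule abs_shift_average_le) (use bound in auto)
  define h where "h = shift_average (geometric_pmf (1 - p)) 1 s g"
  have h_bound: "\<bar>h n\<bar> \<le> B" for n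
    unfolding h_def by (rule abs_shift_average_le) (use g_bound in auto)
  \<comment> \<open>First-step analysis of the geometric distribution.\<close>
  have h_rec: "h n = (1 - p) * g n + p * h (n + s)" for n
  proof -
    have "h n = measure_pmf.expectation
       (bernoulli_pmf (1 - p) \<bind> (\<lambda>b. if b then return_pmf 0 else map_pmf Suc (geometric_pmf (1 - p))))
       (\<lambda>k. 1 ^ k * g (n + s * int k))"
      unfolding h_def shift_average_def using p by (subst geometric_bind_pmf_unfold) auto
    also have "\<dots> = (1 - p) * g n + p * h (n + s)"
      using g_bound p
      by (subst expectation_bind_pmf_bounded[where B=B])
         (auto simp: h_def shift_average_def algebra_simps)
    finally show ?thesis .
  qed
  have "h n - c * f n = 0"
  proof (rule bounded_contraction_eq_0[where d="\<lambda>n. h n - c * f n" and s=s and C="B + c * B"])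
    show "0 \<le> p" "p < 1" using p by simp_all
    fix n
    have "(1 - p) * g n = c * f n - p * (c * f (n + s))"
      using p by (simp add: g c_def q_def field_simps)
    then show "h n - c * f n = p * (h (n + s) - c * f (n + s))"
      using h_rec[of n] by (simp add: algebra_simps)
    have "\<bar>c * f n\<bar> \<le> c * B" using c bound[of n] by (simp add: abs_mult mult_left_mono)
    then show "\<bar>h n - c * f n\<bar> \<le> B + c * B" using h_bound[of n] by simp
  qed
  then show ?thesis by (simp add: h_def g_def q_def c_def)
qed

lemma shift_average_NB_binomial:
  assumes p: "0 < p" "p < 1" and bound: "\<And>n. \<bar>f n\<bar> \<le> B"
  shows "shift_average (NB p r) 1 s (shift_average (binomial_pmf r (p / (1 + p))) (-1) s f) =
    (\<lambda>n. ((1 - p) / (1 + p)) ^ r * f n)"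
  using bound
proof (induction r arbitrary: f B)
  case 0
  have "p / (1 + p) \<in> {0..1}" using p by (auto simp: field_simps)
  then show ?case by (simp add: NB_def binomial_pmf_0 shift_average_def)
next
  case (Suc r)
  define q where "q = p / (1 + p)"
  define c where "c = (1 - p) / (1 + p)"
  define Bern :: "nat pmf" where "Bern = map_pmf of_bool (bernoulli_pmf q)"
  define h where "h = shift_average (binomial_pmf r q) (-1) s f"
  have q: "q \<in> {0..1}" and c: "0 \<le> c" using p by (auto simp: q_def c_def field_simps)
  have h_bound: "\<bar>h n\<bar> \<le> B" for n
    unfolding h_def by (rule abs_shift_average_le) (use Suc.prems in auto)
  have Bern_h_bound: "\<bar>shift_average Bern (-1) s h n\<bar> \<le> B" for n
    by (rule abs_shift_average_le) (use h_bound in auto)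
  have scaled_bound: "\<bar>c ^ r * f n\<bar> \<le> c ^ r * B" for n
    using c Suc.prems[of n] by (simp add: abs_mult mult_left_mono)
  have "shift_average (NB p (Suc r)) 1 s (shift_average (binomial_pmf (Suc r) q) (-1) s f) =
    shift_average (geometric_pmf (1 - p)) 1 s
      (shift_average (NB p r) 1 s (shift_average Bern (-1) s h))"
  proof -
    have "shift_average (binomial_pmf (Suc r) q) (-1) s f = shift_average Bern (-1) s h"
      unfolding binomial_pmf_Suc_add[OF q] Bern_def h_def
      by (rule shift_average_add_pmf[OF _ Suc.prems]) simp
    then show ?thesis
      unfolding NB_Suc by (simp add: shift_average_add_pmf[OF _ Bern_h_bound])
  qed
  also have "shift_average (NB p r) 1 s (shift_average Bern (-1) s h) =
    shift_average Bern (-1) s (shift_average (NB p r) 1 s h)"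
    by (rule shift_average_commute[where B=B]) (auto simp: h_bound)
  also have "shift_average (NB p r) 1 s h = (\<lambda>n. c ^ r * f n)"
    unfolding h_def q_def c_def by (rule Suc.IH[OF Suc.prems])
  also have "shift_average (geometric_pmf (1 - p)) 1 s (shift_average Bern (-1) s (\<lambda>n. c ^ r * f n)) =
    (\<lambda>n. c * (c ^ r * f n))"
    unfolding Bern_def q_def c_def
    by (rule ext, rule shift_average_geometric_bernoulli[OF p scaled_bound[unfolded c_def]])
  finally show ?case by (simp add: q_def c_def mult_ac)
qed

lemma expectation_M_DNB:
  assumes "\<And>m. \<bar>z m\<bar> \<le> B"
  shows "measure_pmf.expectation (M_DNB p r n) z =
    shift_average (NB p r) 1 1 (shift_average (NB p r) 1 (-1) z) n"
  unfolding M_DNB_def shift_average_def integral_map_pmf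
  by (subst expectation_pair_pmf_bounded[where B=B]) (auto simp: assms algebra_simps)

lemma expectation_M_DNB_binomial_filter:
  fixes p :: real and r :: nat and x :: "int \<Rightarrow> real"
  assumes p: "0 < p" "p < 1" and bound: "\<And>m. \<bar>x m\<bar> \<le> B"
  defines "Bin \<equiv> binomial_pmf r (p / (1 + p))"
  shows "measure_pmf.expectation (M_DNB p r n)
      (shift_average Bin (-1) 1 (shift_average Bin (-1) (-1) x)) =
    ((1 - p) / (1 + p)) ^ (2 * r) * x n"
proof -
  define c where "c = (1 - p) / (1 + p)"
  have c: "0 \<le> c" using p by (simp add: c_def)
  have inner_bound: "\<bar>shift_average Bin (-1) (-1) x m\<bar> \<le> B" for m
    by (rule abs_shift_average_le) (simp_all add: bound)
  have "measure_pmf.expectation (M_DNB p r n)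
      (shift_average Bin (-1) 1 (shift_average Bin (-1) (-1) x)) =
    shift_average (NB p r) 1 1
      (shift_average (NB p r) 1 (-1) (shift_average Bin (-1) 1 (shift_average Bin (-1) (-1) x))) n"
    by (rule expectation_M_DNB) (rule abs_shift_average_le, simp, rule inner_bound)
  also have "shift_average (NB p r) 1 (-1) (shift_average Bin (-1) 1 (shift_average Bin (-1) (-1) x)) =
    shift_average Bin (-1) 1 (shift_average (NB p r) 1 (-1) (shift_average Bin (-1) (-1) x))"
    by (rule shift_average_commute[OF _ _ inner_bound]) simp_all
  also have "shift_average (NB p r) 1 (-1) (shift_average Bin (-1) (-1) x) = (\<lambda>m. c ^ r * x m)"
    unfolding Bin_def c_def by (rule shift_average_NB_binomial[OF p bound])
  also have "shift_average (NB p r) 1 1 (shift_average Bin (-1) 1 (\<lambda>m. c ^ r * x m)) =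
    (\<lambda>m. c ^ r * (c ^ r * x m))"
    unfolding Bin_def c_def
    by (rule shift_average_NB_binomial[OF p, where B="c ^ r * B", unfolded c_def])
       (use c bound in \<open>simp add: c_def abs_mult mult_left_mono\<close>)
  finally show ?thesis by (simp add: c_def power_mult mult_2 power_add)
qed

lemma power_int_minus_one_diff: "(-1::real) powi (int a - int b) = (-1) ^ a * (-1) ^ b"
proof -
  have "(-1::real) ^ b * (-1) ^ b = 1" by (simp flip: power_mult_distrib)
  then show ?thesis by (simp add: power_int_diff power_int_of_nat field_simps)
qed

lemma alternating_diff_binomial_sum:
  assumes q: "q \<in> {0..1}" and bound: "\<And>m. \<bar>x m\<bar> \<le> B"
  shows "(\<Sum>j = - int r..int r. (-1) powi j * pmf (diff_binomial_pmf q r) j * x (k + j)) =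
    shift_average (binomial_pmf r q) (-1) 1 (shift_average (binomial_pmf r q) (-1) (-1) x) k"
proof -
  have "set_pmf (diff_binomial_pmf q r) \<subseteq> {- int r..int r}"
    using q by (auto simp: diff_binomial_pmf_def set_pmf_binomial_eq split: if_splits)
  then have "(\<Sum>j = - int r..int r. (-1) powi j * pmf (diff_binomial_pmf q r) j * x (k + j)) =
      measure_pmf.expectation (diff_binomial_pmf q r) (\<lambda>j. (-1) powi j * x (k + j))"
    by (subst integral_measure_pmf_real[where A="{- int r..int r}"]) (auto simp: algebra_simps)
  also have "\<dots> =
      shift_average (binomial_pmf r q) (-1) 1 (shift_average (binomial_pmf r q) (-1) (-1) x) k"
    unfolding diff_binomial_pmf_def shift_average_def integral_map_pmf
    by (subst expectation_pair_pmf_bounded[where B=B])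
       (auto simp: bound abs_mult power_int_minus_one_diff power_abs algebra_simps
             simp flip: integral_mult_right_zero)
  finally show ?thesis .
qed

lemma scaled_expectation_in_rowcone:
  assumes "M \<in> CNF Priv" and "C \<ge> 0" and z: "\<And>m. 0 \<le> z m" "\<And>m. z m \<le> B"
  shows "(\<lambda>n. C * measure_pmf.expectation (M n) z) \<in> rowcone Priv"
proof -
  define K where "K = \<bar>B\<bar> + 1"
  have K: "K > 0" "\<And>m. z m / K \<in> {0..1}"
    using z by (auto simp: K_def field_simps intro: order.trans[of _ B])
  define A where "A = (\<lambda>m. map_pmf (of_bool :: bool \<Rightarrow> int) (bernoulli_pmf (z m / K)))"
  have "pmf (A m) 1 = z m / K" for m
    using pmf_map_inj'[of "of_bool :: bool \<Rightarrow> int" "bernoulli_pmf (z m / K)" True] K(2)[of m]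
    by (simp add: A_def inj_def)
  then have "C * measure_pmf.expectation (M n) z = C * K * pmf (bind_pmf (M n) A) 1" for n
    using K(1) by (simp add: pmf_bind)
  moreover have "(\<lambda>n. bind_pmf (M n) A) \<in> CNF Priv"
    by (rule CNF.post[OF assms(1)])
  ultimately show ?thesis
    unfolding rowcone_def using assms(2) K(1)
    by (intro CollectI exI[of _ "C * K"] exI[of _ "\<lambda>n. bind_pmf (M n) A"] exI[of _ 1] conjI) auto
qed

theorem theorem6:
  fixes p :: real and r :: nat and x :: "int \<Rightarrow> real"
  assumes "0 < p" and "p < 1" and "r > 0"
    and "bounded (range x)"
    and "\<And>k. (\<Sum>j = - int r..int r.
              (-1) powi j * pmf (diff_binomial_pmf (p / (1 + p)) r) j * x (k + j)) \<ge> 0"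
  shows "x \<in> rowcone {M_DNB p r}"
proof -
  obtain B where bound: "\<And>n. \<bar>x n\<bar> \<le> B"
    using assms(4) by (auto simp: bounded_iff)
  define Bin where "Bin = binomial_pmf r (p / (1 + p))"
  define y where "y = shift_average Bin (-1) 1 (shift_average Bin (-1) (-1) x)"
  define c where "c = ((1 - p) / (1 + p)) ^ (2 * r)"
  have q: "p / (1 + p) \<in> {0..1}" and "c > 0"
    using assms(1,2) by (auto simp: c_def field_simps)
  have y_nonneg: "0 \<le> y k" for k
    using assms(5)[of k] alternating_diff_binomial_sum[where x=x and r=r and k=k, OF q bound]
    by (simp add: y_def Bin_def)
  have inner_bound: "\<bar>shift_average Bin (-1) (-1) x k\<bar> \<le> B" for k
    by (rule abs_shift_average_le) (simp_all add: bound)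
  have y_bound: "y k \<le> B" for k
    unfolding y_def by (rule abs_le_D1, rule abs_shift_average_le) (simp_all add: inner_bound)
  have "measure_pmf.expectation (M_DNB p r n) y = c * x n" for n
    unfolding y_def Bin_def c_def by (rule expectation_M_DNB_binomial_filter[OF assms(1,2) bound])
  then have "x = (\<lambda>n. inverse c * measure_pmf.expectation (M_DNB p r n) y)"
    using \<open>c > 0\<close> by (simp add: mult.assoc[symmetric])
  also have "\<dots> \<in> rowcone {M_DNB p r}"
    using \<open>c > 0\<close> y_nonneg y_bound by (intro scaled_expectation_in_rowcone CNF.base) auto
  finally show ?thesis .
qed

end
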